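(* Let $\lambda\subseteq T^*\mathbb{C}^d$ be a positive Lagrangian, let $\lambda_1=\{x\in\mathbb{C}^d:\exists\xi\in\mathbb{C}^d,\ (x,\xi)\in\lambda\}$, $k=\dim_{\mathbb{C}}\lambda_1$ and $N=d-k$. Then there exists a quadratic form $\rho$ on $\mathbb{R}^d$ (with complex coefficients, extended bilinearly to $\mathbb{C}^d$) with ${\rm Im}\,\rho\ge 0$ on $\mathbb{R}^d$, such that: if $k=d$ then $$\lambda=\{(x,\rho'(x)):\ x\in\mathbb{C}^d\},$$ while if $0\le k\le d-1$ there exists an injective real matrix $L\in\mathbb{R}^{d\times N}$ such that ${\rm Re}(\operatorname{Ran}\rho')$ and ${\rm Im}(\operatorname{Ran}\rho')$ are contained in $(\operatorname{Ran}L)^\perp\subseteq\mathbb{R}^d$ (where $\operatorname{Ran}\rho'=\{\rho'(x):x\in\mathbb{C}^d\}$ and $\operatorname{Ran}L=L\mathbb{R}^N$), and $$\lambda=\{(x,\rho'(x)+L\theta):\ (x,\theta)\in\mathbb{C}^{d+N},\ L^tx=0\}.$$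
   Context: $T^*\mathbb{C}^d\simeq\mathbb{C}^{2d}$ carries the canonical symplectic form $\sigma((x,\xi),(x',\xi'))=\langle x',\xi\rangle-\langle x,\xi'\rangle$, with $\langle\cdot,\cdot\rangle$ the bilinear form $\langle z,w\rangle=\sum z_jw_j$. A Lagrangian is a complex linear subspace $\lambda$ with $\lambda=\{X:\sigma(X,Y)=0\ \forall Y\in\lambda\}$; it is positive if $i\sigma(\overline X,X)\ge0$ for all $X\in\lambda$. $\rho'$ denotes the gradient of $\rho$. *)

theory Defs
  imports "HOL-Analysis.Analysis"
begin

text \<open>Points of T^*C^d are pairs (x, xi) of vectors in complex^'n, d = CARD('n).\<close>

definition bil :: "complex^'n \<Rightarrow> complex^'n \<Rightarrow> complex" where
  "bil z w = (\<Sum>j\<in>UNIV. z $ j * w $ j)"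

definition symp :: "((complex^'n) \<times> (complex^'n)) \<Rightarrow> ((complex^'n) \<times> (complex^'n)) \<Rightarrow> complex" where
  "symp X Y = bil (fst Y) (snd X) - bil (fst X) (snd Y)"

definition pscale :: "complex \<Rightarrow> ((complex^'n) \<times> (complex^'n)) \<Rightarrow> ((complex^'n) \<times> (complex^'n))" where
  "pscale c X = (c *s fst X, c *s snd X)"

definition cconj :: "complex^'n \<Rightarrow> complex^'n" where
  "cconj x = (\<chi> i. cnj (x $ i))"

definition lagrangian :: "((complex^'n) \<times> (complex^'n)) set \<Rightarrow> bool" where
  "lagrangian \<Lambda> \<longleftrightarrow> module.subspace pscale \<Lambda> \<and>
     \<Lambda> = {X. \<forall>Y\<in>\<Lambda>. symp X Y = 0}"

text \<open>i sigma(conj X, X) >= 0 in the sense of complex numbers: real and nonnegative.\<close>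
definition positive_lagrangian :: "((complex^'n) \<times> (complex^'n)) set \<Rightarrow> bool" where
  "positive_lagrangian \<Lambda> \<longleftrightarrow> lagrangian \<Lambda> \<and>
     (\<forall>X\<in>\<Lambda>. let z = \<i> * symp (cconj (fst X), cconj (snd X)) X in Im z = 0 \<and> 0 \<le> Re z)"

definition cdim :: "(complex^'n) set \<Rightarrow> nat" where
  "cdim S = vector_space.dim ((*s) :: complex \<Rightarrow> complex^'n \<Rightarrow> complex^'n) S"

definition quad :: "complex^'n^'n \<Rightarrow> complex^'n \<Rightarrow> complex" where
  "quad Q x = (\<Sum>i\<in>UNIV. \<Sum>j\<in>UNIV. Q $ i $ j * x $ i * x $ j)"

definition grad :: "complex^'n^'n \<Rightarrow> complex^'n \<Rightarrow> complex^'n" where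
  "grad Q x = (\<chi> i. \<Sum>j\<in>UNIV. (Q $ i $ j + Q $ j $ i) * x $ j)"

definition cvec :: "real^'n \<Rightarrow> complex^'n" where
  "cvec x = (\<chi> i. complex_of_real (x $ i))"

definition revec :: "complex^'n \<Rightarrow> real^'n" where
  "revec v = (\<chi> i. Re (v $ i))"

definition imvec :: "complex^'n \<Rightarrow> real^'n" where
  "imvec v = (\<chi> i. Im (v $ i))"

text \<open>A real d x N matrix L given by its list of N columns; applied to theta in R^N / C^N.\<close>
definition Lapp :: "(real^'n) list \<Rightarrow> real list \<Rightarrow> real^'n" where
  "Lapp L \<theta> = (\<Sum>j<length L. (\<theta> ! j) *\<^sub>R (L ! j))"

definition Lappc :: "(real^'n) list \<Rightarrow> complex list \<Rightarrow> complex^'n" where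
  "Lappc L \<theta> = (\<Sum>j<length L. (\<theta> ! j) *s cvec (L ! j))"

definition Ltrans :: "(real^'n) list \<Rightarrow> complex^'n \<Rightarrow> complex list" where
  "Ltrans L x = map (\<lambda>c. bil (cvec c) x) L"

definition RanL :: "(real^'n) list \<Rightarrow> (real^'n) set" where
  "RanL L = {Lapp L \<theta> | \<theta>. length \<theta> = length L}"

end

theory Submission
  imports Defs
begin

text \<open>The vertical part \<open>vert = {\<xi>. (0, \<xi>) \<in> \<Lambda>}\<close> and the projection \<open>base = \<lambda>\<^sub>1\<close> are each
  other's annihilators for the bilinear pairing. Positivity makes \<open>vert\<close> closed under complex
  conjugation, so \<open>vert\<close> is the complexification of a real subspace \<open>V\<close> and \<open>base\<close> that of
  \<open>V\<^sup>\<bottom>\<close>; in particular \<open>dim V = d - k\<close>. Pick an orthonormal basis \<open>B\<close> of \<open>V\<^sup>\<bottom>\<close> and points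
  \<open>(b, \<eta> b) \<in> \<Lambda>\<close>. Since \<open>\<Lambda>\<close> is Lagrangian, \<open>\<langle>c, \<eta> b\<rangle>\<close> is symmetric in \<open>b, c \<in> B\<close> and defines a quadratic
  form \<open>\<rho>\<close> with \<open>\<Lambda> = {(x, \<rho>'(x) + \<xi>). x \<in> base, \<xi> \<in> vert}\<close>; on \<open>\<real>^d\<close>, \<open>Im \<rho> \<ge> 0\<close> is positivity
  of \<open>\<Lambda>\<close> at real points. A basis \<open>L\<close> of \<open>V\<close> then parametrises \<open>vert\<close> and cuts out \<open>base\<close>.\<close>

lemma bil_add_right: "bil x (y + z) = bil x y + bil x z"
  by (simp add: bil_def distrib_left sum.distrib)

lemma bil_add_left: "bil (y + z) x = bil y x + bil z x"
  by (simp add: bil_def distrib_right sum.distrib)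

lemma bil_diff_right: "bil x (y - z) = bil x y - bil x z"
  by (simp add: bil_def right_diff_distrib sum_subtractf)

lemma bil_scale_right: "bil x (c *s y) = c * bil x y"
  by (simp add: bil_def sum_distrib_left mult.assoc mult.left_commute)

lemma bil_scale_left: "bil (c *s y) x = c * bil y x"
  by (simp add: bil_def sum_distrib_left mult.assoc mult.left_commute)

lemma bil_commute: "bil x y = bil y x"
  by (simp add: bil_def mult.commute)

lemma bil_zero_left [simp]: "bil 0 x = 0" and bil_zero_right [simp]: "bil x 0 = 0"
  by (simp_all add: bil_def)

lemma bil_sum_right: "bil x (\<Sum>a\<in>A. f a) = (\<Sum>a\<in>A. bil x (f a))"
  by (induction A rule: infinite_finite_induct) (auto simp: bil_add_right)

lemma bil_sum_left: "bil (\<Sum>a\<in>A. f a) x = (\<Sum>a\<in>A. bil (f a) x)"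
  by (induction A rule: infinite_finite_induct) (auto simp: bil_add_left)

lemma cconj_cconj [simp]: "cconj (cconj x) = x"
  by (simp add: cconj_def vec_eq_iff)

lemma bil_cconj: "bil (cconj x) (cconj y) = cnj (bil x y)"
  by (simp add: bil_def cconj_def)

lemma bil_cconj_self_eq_0_iff: "bil x (cconj x) = 0 \<longleftrightarrow> x = 0"
proof
  assume "bil x (cconj x) = 0"
  moreover have "Re (bil x (cconj x)) = (\<Sum>j\<in>UNIV. (Re (x$j))\<^sup>2 + (Im (x$j))\<^sup>2)"
    by (simp add: bil_def cconj_def power2_eq_square)
  ultimately have "(\<Sum>j\<in>UNIV. (Re (x$j))\<^sup>2 + (Im (x$j))\<^sup>2) = 0"
    by simp
  then have "\<forall>j. (Re (x$j))\<^sup>2 + (Im (x$j))\<^sup>2 = 0"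
    by (subst (asm) sum_nonneg_eq_0_iff) auto
  then show "x = 0" by (simp add: vec_eq_iff complex_eq_iff)
qed simp

lemma inner_eq_Re_bil_cconj: "inner q w = Re (bil (cconj q) w)"
  by (simp add: inner_vec_def bil_def cconj_def inner_complex_def)

lemma revec_nth [simp]: "revec x $ i = Re (x $ i)"
  and imvec_nth [simp]: "imvec x $ i = Im (x $ i)"
  and cvec_nth [simp]: "cvec r $ i = complex_of_real (r $ i)"
  by (simp_all add: revec_def imvec_def cvec_def)

lemma revec_cvec [simp]: "revec (cvec r) = r" and imvec_cvec [simp]: "imvec (cvec r) = 0"
  and cconj_cvec [simp]: "cconj (cvec r) = cvec r"
  by (simp_all add: vec_eq_iff cconj_def)

lemma cvec_0 [simp]: "cvec 0 = 0" by (simp add: vec_eq_iff)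

lemma cvec_add: "cvec (r + s) = cvec r + cvec s"
  and cvec_scaleR: "cvec (c *\<^sub>R r) = complex_of_real c *s cvec r"
  by (simp_all add: vec_eq_iff)

lemma cvec_inj: "inj cvec" by (rule injI) (simp add: vec_eq_iff)

lemma cvec_revec_plus_imvec: "cvec (revec x) + \<i> *s cvec (imvec x) = x"
  by (simp add: vec_eq_iff complex_eq_iff)

lemma vec_eq_iff_revec_imvec: "x = y \<longleftrightarrow> revec x = revec y \<and> imvec x = imvec y"
  by (metis cvec_revec_plus_imvec)

lemma cvec_revec_eq: "cvec (revec x) = (1/2) *s (x + cconj x)"
  and cvec_imvec_eq: "cvec (imvec x) = (-\<i>/2) *s (x - cconj x)"
  by (simp_all add: vec_eq_iff cconj_def complex_eq_iff)

lemma revec_sum_scale_cvec: "revec (\<Sum>i\<in>I. c i *s cvec (w i)) = (\<Sum>i\<in>I. Re (c i) *\<^sub>R w i)"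
  and imvec_sum_scale_cvec: "imvec (\<Sum>i\<in>I. c i *s cvec (w i)) = (\<Sum>i\<in>I. Im (c i) *\<^sub>R w i)"
  by (simp_all add: vec_eq_iff sum_component Re_sum Im_sum)

lemma bil_cvec: "bil (cvec r) x = of_real (inner r (revec x)) + \<i> * of_real (inner r (imvec x))"
  by (simp add: bil_def inner_vec_def complex_eq_iff)

lemma Re_bil_cvec [simp]: "Re (bil (cvec r) x) = inner r (revec x)"
  and Im_bil_cvec [simp]: "Im (bil (cvec r) x) = inner r (imvec x)"
  by (simp_all add: bil_cvec)

lemma bil_cvec_cvec: "bil (cvec r) (cvec s) = of_real (inner r s)"
  by (simp add: bil_def inner_vec_def)

lemma bil_cvec_eq_0_iff: "bil (cvec r) x = 0 \<longleftrightarrow> orthogonal r (revec x) \<and> orthogonal r (imvec x)"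
  by (simp add: bil_cvec orthogonal_def complex_eq_iff)

section \<open>Complexified real subspaces\<close>

definition complexify :: "(real^'n) set \<Rightarrow> (complex^'n) set" where
  "complexify V = {x. revec x \<in> V \<and> imvec x \<in> V}"

definition bil_perp :: "(complex^'n) set \<Rightarrow> (complex^'n) set" where
  "bil_perp S = {y. \<forall>x\<in>S. bil x y = 0}"

lemma vec_subspace_bil_perp: "vec.subspace (bil_perp S)"
  unfolding vec.subspace_def bil_perp_def by (simp add: bil_add_right bil_scale_right)

lemma cvec_mem_complexify: "0 \<in> V \<Longrightarrow> r \<in> V \<Longrightarrow> cvec r \<in> complexify V"
  by (simp add: complexify_def)

lemma complexify_0 [simp]: "complexify {0} = {0}"
  by (auto simp: complexify_def vec_eq_iff complex_eq_iff)

lemma complexify_UNIV [simp]: "complexify UNIV = UNIV"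
  by (simp add: complexify_def)

lemma bil_perp_complexify:
  assumes "0 \<in> V"
  shows "bil_perp (complexify V) = complexify (V\<^sup>\<bottom>)"
proof (intro set_eqI iffI)
  fix y assume "y \<in> bil_perp (complexify V)"
  then have "bil (cvec r) y = 0" if "r \<in> V" for r
    using cvec_mem_complexify[OF assms that] by (simp add: bil_perp_def)
  then show "y \<in> complexify (V\<^sup>\<bottom>)"
    by (simp add: complexify_def orthogonal_comp_def bil_cvec_eq_0_iff)
next
  fix y assume "y \<in> complexify (V\<^sup>\<bottom>)"
  then have perp: "bil (cvec r) y = 0" if "r \<in> V" for r
    using that by (simp add: complexify_def orthogonal_comp_def bil_cvec_eq_0_iff)
  have "bil x y = 0" if "x \<in> complexify V" for x
  proof -
    have "bil x y = bil (cvec (revec x)) y + \<i> * bil (cvec (imvec x)) y"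
      by (subst cvec_revec_plus_imvec[of x, symmetric]) (simp add: bil_add_left bil_scale_left)
    with that perp show ?thesis by (simp add: complexify_def)
  qed
  then show "y \<in> bil_perp (complexify V)" by (simp add: bil_perp_def)
qed

lemma complexify_span:
  assumes "finite S"
  shows "complexify (span S) = range (\<lambda>c. \<Sum>v\<in>S. c v *s cvec v)"
proof (intro set_eqI iffI)
  fix x assume "x \<in> complexify (span S)"
  then obtain a b where a: "revec x = (\<Sum>v\<in>S. a v *\<^sub>R v)" and b: "imvec x = (\<Sum>v\<in>S. b v *\<^sub>R v)"
    using span_finite[OF assms] by (auto simp: complexify_def)
  have "x = (\<Sum>v\<in>S. Complex (a v) (b v) *s cvec v)"
    by (simp add: vec_eq_iff_revec_imvec revec_sum_scale_cvec imvec_sum_scale_cvec a b)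
  then show "x \<in> range (\<lambda>c. \<Sum>v\<in>S. c v *s cvec v)"
    by (rule range_eqI[where x = "\<lambda>v. Complex (a v) (b v)"])
next
  fix x assume "x \<in> range (\<lambda>c. \<Sum>v\<in>S. c v *s cvec v)"
  then show "x \<in> complexify (span S)"
    by (auto simp: complexify_def revec_sum_scale_cvec imvec_sum_scale_cvec span_sum span_scale span_base)
qed

lemma independent_cvec_image:
  assumes "independent B"
  shows "vec.independent (cvec ` B)"
  unfolding vec.independent_explicit
proof (intro conjI allI impI ballI)
  have fin: "finite B" using assms independent_imp_finite by blast
  then show "finite (cvec ` B)" by simp
  have inj: "inj_on cvec B" using cvec_inj inj_on_subset by blast
  fix c v assume sum0: "(\<Sum>v\<in>cvec ` B. c v *s v) = 0" and "v \<in> cvec ` B"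
  then obtain b where b: "b \<in> B" "v = cvec b" by blast
  have "(\<Sum>b\<in>B. c (cvec b) *s cvec b) = 0"
    using sum0 by (simp add: sum.reindex[OF inj])
  then have "revec (\<Sum>b\<in>B. c (cvec b) *s cvec b) = 0" "imvec (\<Sum>b\<in>B. c (cvec b) *s cvec b) = 0"
    by (simp_all add: vec_eq_iff)
  then have re: "(\<Sum>b\<in>B. Re (c (cvec b)) *\<^sub>R b) = 0" and im: "(\<Sum>b\<in>B. Im (c (cvec b)) *\<^sub>R b) = 0"
    unfolding revec_sum_scale_cvec imvec_sum_scale_cvec by auto
  have "Re (c (cvec b)) = 0" "Im (c (cvec b)) = 0"
    using real_vector.independentD[OF assms fin subset_refl re b(1)]
      real_vector.independentD[OF assms fin subset_refl im b(1)] by simp_all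
  then show "c v = 0" using b(2) by (simp add: complex_eq_iff)
qed

lemma cdim_complexify:
  assumes "subspace V"
  shows "cdim (complexify V) = dim V"
proof -
  obtain B where B: "B \<subseteq> V" "independent B" "V \<subseteq> span B" "card B = dim V"
    using basis_exists by blast
  have fin: "finite B" using B(2) independent_imp_finite by blast
  have V: "V = span B" using B assms by (metis span_subspace)
  have "cvec ` B \<subseteq> complexify V"
    using B(1) subspace_0[OF assms] by (auto intro: cvec_mem_complexify)
  moreover have "complexify V \<subseteq> vec.span (cvec ` B)"
    unfolding V complexify_span[OF fin]
    by (auto intro!: vec.span_sum vec.span_scale intro: vec.span_base)
  ultimately have "vec.dim (complexify V) = card (cvec ` B)"
    by (rule vec.basis_card_eq_dim[OF _ _ independent_cvec_image[OF B(2)], symmetric])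
  also have "\<dots> = card B"
    by (rule card_image[OF inj_on_subset[OF cvec_inj subset_UNIV]])
  finally show ?thesis by (simp add: cdim_def B(4))
qed

lemma complexify_orthonormal_expand:
  assumes "finite B" "pairwise orthogonal B" "\<And>b. b \<in> B \<Longrightarrow> norm b = 1"
    and "x \<in> complexify (span B)"
  shows "(\<Sum>b\<in>B. bil (cvec b) x *s cvec b) = x"
proof -
  have "(\<Sum>b\<in>B. (revec x \<bullet> b) *\<^sub>R b) = revec x" "(\<Sum>b\<in>B. (imvec x \<bullet> b) *\<^sub>R b) = imvec x"
    using assms orthonormal_basis_expand by (auto simp: complexify_def)
  then show ?thesis
    unfolding vec_eq_iff_revec_imvec revec_sum_scale_cvec imvec_sum_scale_cvec
    by (simp add: inner_commute)
qed

section \<open>Real matrices as lists of columns\<close>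

lemma orthogonal_comp_span: "(span S)\<^sup>\<bottom> = S\<^sup>\<bottom>"
proof
  show "(span S)\<^sup>\<bottom> \<subseteq> S\<^sup>\<bottom>" by (rule orthogonal_comp_anti_mono[OF span_superset])
  show "S\<^sup>\<bottom> \<subseteq> (span S)\<^sup>\<bottom>"
    by (auto simp: orthogonal_comp_def orthogonal_commute intro: orthogonal_to_span)
qed

lemma sum_distinct_set_conv_nth:
  "distinct xs \<Longrightarrow> (\<Sum>x\<in>set xs. f x) = (\<Sum>i<length xs. f (xs ! i))"
  by (simp add: sum_list_distinct_conv_sum_set[symmetric] sum_list_sum_nth atLeast0LessThan)

lemma subspace_basis_list:
  fixes V :: "'a::euclidean_space set"
  assumes "subspace V"
  obtains L where "distinct L" "independent (set L)" "span (set L) = V" "length L = dim V"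
proof -
  obtain B where B: "B \<subseteq> V" "independent B" "V \<subseteq> span B" "card B = dim V"
    using basis_exists by metis
  have "finite B" using B(2) independent_imp_finite by blast
  then obtain L where L: "distinct L" "set L = B"
    using finite_distinct_list by blast
  show thesis
  proof (rule that)
    show "distinct L" by (fact L(1))
    show "independent (set L)" using B(2) L(2) by simp
    show "span (set L) = V" using span_subspace[OF B(1,3) assms] L(2) by simp
    show "length L = dim V" using distinct_card[OF L(1)] L(2) B(4) by simp
  qed
qed

lemma sum_scale_nth_mem_span: "(\<Sum>j<length L. c j *\<^sub>R L ! j) \<in> span (set L)"
  by (intro span_sum span_scale span_base nth_mem) simp

lemma RanL_subset_span: "RanL L \<subseteq> span (set L)"
  using sum_scale_nth_mem_span by (auto simp: RanL_def Lapp_def)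

lemma inj_on_Lapp:
  assumes "distinct L" "independent (set L)"
  shows "inj_on (Lapp L) {\<theta>. length \<theta> = length L}"
proof (rule inj_onI)
  fix s t assume s: "s \<in> {\<theta>. length \<theta> = length L}" and t: "t \<in> {\<theta>. length \<theta> = length L}"
    and eq: "Lapp L s = Lapp L t"
  define idx where "idx = the_inv_into {..<length L} ((!) L)"
  have idx: "idx (L ! j) = j" if "j < length L" for j
    using that assms(1) by (simp add: idx_def the_inv_into_f_f inj_on_nth)
  define u where "u v = s ! idx v - t ! idx v" for v
  have "(\<Sum>v\<in>set L. u v *\<^sub>R v) = Lapp L s - Lapp L t"
    by (simp add: sum_distinct_set_conv_nth[OF assms(1)] u_def idx Lapp_def scaleR_diff_left sum_subtractf)
  then have u0: "u v = 0" if "v \<in> set L" for v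
    using eq real_vector.independentD[OF assms(2) finite_set subset_refl _ that] by simp
  show "s = t"
  proof (rule nth_equalityI)
    show "length s = length t" using s t by simp
    fix j assume "j < length s"
    then have "j < length L" using s by simp
    then show "s ! j = t ! j" using u0[of "L ! j"] by (simp add: u_def idx)
  qed
qed

lemma range_Lappc:
  assumes "distinct L"
  shows "{Lappc L \<theta> | \<theta>. length \<theta> = length L} = complexify (span (set L))"
proof (intro set_eqI iffI)
  fix x assume "x \<in> {Lappc L \<theta> | \<theta>. length \<theta> = length L}"
  then show "x \<in> complexify (span (set L))"
    by (auto simp: complexify_def Lappc_def revec_sum_scale_cvec imvec_sum_scale_cvec sum_scale_nth_mem_span)
next
  fix x assume "x \<in> complexify (span (set L))"
  then obtain c where "x = (\<Sum>v\<in>set L. c v *s cvec v)"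
    using complexify_span[OF finite_set] by blast
  then have "x = Lappc L (map c L)"
    by (simp add: sum_distinct_set_conv_nth[OF assms] Lappc_def)
  then show "x \<in> {Lappc L \<theta> | \<theta>. length \<theta> = length L}" by auto
qed

lemma Ltrans_eq_0_iff:
  "Ltrans L x = replicate (length L) 0 \<longleftrightarrow> x \<in> complexify ((span (set L))\<^sup>\<bottom>)"
proof -
  have "Ltrans L x = replicate (length L) 0 \<longleftrightarrow> (\<forall>r\<in>set L. bil (cvec r) x = 0)"
    by (induction L) (simp_all add: Ltrans_def)
  then show ?thesis
    unfolding orthogonal_comp_span
    by (auto simp: complexify_def orthogonal_comp_def bil_cvec_eq_0_iff)
qed

definition outer_prod :: "complex^'n \<Rightarrow> complex^'n \<Rightarrow> complex^'n^'n" where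
  "outer_prod u v = (\<chi> i j. u $ i * v $ j)"

lemma quad_outer_prod: "quad (outer_prod u v) x = bil u x * bil v x"
  by (simp add: quad_def outer_prod_def bil_def sum_product mult_ac)

lemma grad_outer_prod: "grad (outer_prod u v) x = bil v x *s u + bil u x *s v"
  by (simp add: grad_def outer_prod_def bil_def vec_eq_iff sum_distrib_left distrib_left sum.distrib mult_ac)

lemma quad_sum: "quad (\<Sum>i\<in>I. Q i) x = (\<Sum>i\<in>I. quad (Q i) x)"
  by (simp add: quad_def sum_component sum_distrib_right sum.swap[of _ I])

lemma grad_sum: "grad (\<Sum>i\<in>I. Q i) x = (\<Sum>i\<in>I. grad (Q i) x)"
  by (simp add: grad_def vec_eq_iff sum_component distrib_right sum.distrib sum_distrib_right sum.swap[of _ I])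

section \<open>Positive Lagrangians\<close>

lemma module_pscale: "module (pscale :: complex \<Rightarrow> (complex^'n) \<times> (complex^'n) \<Rightarrow> _)"
  by unfold_locales (auto simp: pscale_def vec.scale_right_distrib vec.scale_left_distrib)

locale pos_lagrangian =
  fixes \<Lambda> :: "((complex^'n) \<times> (complex^'n)) set"
  assumes positive: "positive_lagrangian \<Lambda>"
begin

definition base :: "(complex^'n) set" where "base = fst ` \<Lambda>"
definition vert :: "(complex^'n) set" where "vert = {\<xi>. (0, \<xi>) \<in> \<Lambda>}"
definition vert_re :: "(real^'n) set" where "vert_re = {r. cvec r \<in> vert}"

lemma mem_iff_symp: "X \<in> \<Lambda> \<longleftrightarrow> (\<forall>Y\<in>\<Lambda>. symp X Y = 0)"
  using positive unfolding positive_lagrangian_def lagrangian_def by blast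

lemma subspace_\<Lambda>: "module.subspace pscale \<Lambda>"
  using positive unfolding positive_lagrangian_def lagrangian_def by blast

lemma pair_0: "(0, 0) \<in> \<Lambda>"
  using module.subspace_0[OF module_pscale subspace_\<Lambda>] by (simp add: zero_prod_def)

lemma pair_add: "(x, \<xi>) \<in> \<Lambda> \<Longrightarrow> (y, \<eta>) \<in> \<Lambda> \<Longrightarrow> (x + y, \<xi> + \<eta>) \<in> \<Lambda>"
  using module.subspace_add[OF module_pscale subspace_\<Lambda>] by fastforce

lemma pair_scale: "(x, \<xi>) \<in> \<Lambda> \<Longrightarrow> (c *s x, c *s \<xi>) \<in> \<Lambda>"
  using module.subspace_scale[OF module_pscale subspace_\<Lambda>, of "(x, \<xi>)" c] by (simp add: pscale_def)

lemma pair_diff: "(x, \<xi>) \<in> \<Lambda> \<Longrightarrow> (y, \<eta>) \<in> \<Lambda> \<Longrightarrow> (x - y, \<xi> - \<eta>) \<in> \<Lambda>"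
  using pair_add[of x \<xi> "(-1) *s y" "(-1) *s \<eta>"] pair_scale[of y \<eta> "-1"] by simp

lemma pair_sum:
  "finite A \<Longrightarrow> (\<And>a. a \<in> A \<Longrightarrow> (f a, g a) \<in> \<Lambda>) \<Longrightarrow> ((\<Sum>a\<in>A. f a), (\<Sum>a\<in>A. g a)) \<in> \<Lambda>"
  by (induction A rule: finite_induct) (simp_all add: pair_0 pair_add)

lemma Im_bil_cconj_nonneg:
  assumes "(x, \<xi>) \<in> \<Lambda>"
  shows "0 \<le> Im (bil (cconj x) \<xi>)"
proof -
  have "symp (cconj x, cconj \<xi>) (x, \<xi>) = cnj (bil (cconj x) \<xi>) - bil (cconj x) \<xi>"
    using bil_cconj[of "cconj x" \<xi>] by (simp add: symp_def)
  moreover have "0 \<le> Re (\<i> * symp (cconj x, cconj \<xi>) (x, \<xi>))"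
    using positive assms unfolding positive_lagrangian_def Let_def by fastforce
  ultimately show ?thesis by simp
qed

lemma base_iff: "x \<in> base \<longleftrightarrow> (\<exists>\<xi>. (x, \<xi>) \<in> \<Lambda>)"
  unfolding base_def by force

lemma vert_eq_bil_perp: "vert = bil_perp base"
proof -
  have "\<xi> \<in> vert \<longleftrightarrow> (\<forall>Y\<in>\<Lambda>. symp (0, \<xi>) Y = 0)" for \<xi>
    unfolding vert_def using mem_iff_symp by blast
  then show ?thesis
    unfolding bil_perp_def base_def symp_def by force
qed

text \<open>Positivity forces \<open>vert\<close> to be real: otherwise a vertical vector, scaled suitably and
  added to a point of \<open>\<Lambda>\<close>, would make \<open>Im (bil (cconj x) \<xi>)\<close> negative.\<close>
lemma cconj_mem_vert:
  assumes "\<xi> \<in> vert"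
  shows "cconj \<xi> \<in> vert"
proof -
  have "bil (cconj x) \<xi> = 0" if "x \<in> base" for x
  proof (rule ccontr)
    assume nz: "bil (cconj x) \<xi> \<noteq> 0"
    obtain \<eta> where x\<eta>: "(x, \<eta>) \<in> \<Lambda>" using \<open>x \<in> base\<close> base_iff by blast
    define c where "c = Im (bil (cconj x) \<eta>) + 1"
    define t where "t = - \<i> * complex_of_real c / bil (cconj x) \<xi>"
    have "(0, t *s \<xi>) \<in> \<Lambda>" using pair_scale[of 0 \<xi> t] assms by (simp add: vert_def)
    then have "(x, \<eta> + t *s \<xi>) \<in> \<Lambda>" using pair_add[OF x\<eta>] by fastforce
    then have "0 \<le> Im (bil (cconj x) (\<eta> + t *s \<xi>))" by (rule Im_bil_cconj_nonneg)
    moreover have "bil (cconj x) (\<eta> + t *s \<xi>) = bil (cconj x) \<eta> - \<i> * complex_of_real c"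
      using nz by (simp add: bil_add_right bil_diff_right bil_scale_right t_def)
    ultimately show False by (simp add: c_def)
  qed
  then have "bil x (cconj \<xi>) = 0" if "x \<in> base" for x
    using that bil_cconj[of "cconj x" \<xi>] by auto
  then show ?thesis by (simp add: vert_eq_bil_perp bil_perp_def)
qed

lemma base_real_subspace: "subspace base"
  unfolding subspace_def
proof (intro conjI ballI allI)
  show "0 \<in> base" using pair_0 base_iff by blast
  fix x y assume "x \<in> base" "y \<in> base"
  then show "x + y \<in> base" using pair_add base_iff by blast
next
  fix c :: real and x assume "x \<in> base"
  moreover have "c *\<^sub>R x = complex_of_real c *s x" by (simp add: vec_eq_iff complex_eq_iff)
  ultimately show "c *\<^sub>R x \<in> base" using pair_scale base_iff by metis
qed

text \<open>If \<open>q\<close> is real-orthogonal to \<open>base\<close> (viewed inside \<open>\<real>^(2d)\<close>), then \<open>cconj q \<in> vert\<close>; for the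
  component \<open>q\<close> of \<open>x \<in> bil_perp vert\<close> orthogonal to \<open>base\<close> this gives \<open>bil q (cconj q) = 0\<close>.\<close>
lemma base_eq_bil_perp: "base = bil_perp vert"
proof (intro set_eqI iffI)
  fix x assume "x \<in> base"
  then have "bil \<xi> x = 0" if "\<xi> \<in> vert" for \<xi>
    using that by (simp add: vert_eq_bil_perp bil_perp_def bil_commute[of \<xi> x])
  then show "x \<in> bil_perp vert" by (simp add: bil_perp_def)
next
  fix x assume x: "x \<in> bil_perp vert"
  obtain p q where p: "p \<in> span base" and q: "\<And>w. w \<in> span base \<Longrightarrow> orthogonal q w" and xpq: "x = p + q"
    using orthogonal_subspace_decomp_exists[of base x] by metis
  have pb: "p \<in> base" using p base_real_subspace by (metis span_eq_iff)
  have perp: "bil w (cconj q) = 0" if "w \<in> base" for w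
  proof -
    have "\<i> *s w \<in> base" using that pair_scale base_iff by blast
    then have "orthogonal q w" "orthogonal q (\<i> *s w)" using q that span_base by blast+
    then have "bil (cconj q) w = 0"
      by (simp add: orthogonal_def inner_eq_Re_bil_cconj bil_scale_right complex_eq_iff)
    then show ?thesis by (simp add: bil_commute)
  qed
  then have "cconj q \<in> vert" by (simp add: vert_eq_bil_perp bil_perp_def)
  then have "bil p (cconj q) = 0" using perp pb by blast
  moreover have "bil (cconj q) x = 0"
    using x \<open>cconj q \<in> vert\<close> by (simp add: bil_perp_def)
  then have "bil x (cconj q) = 0" using bil_commute[of x] by simp
  ultimately have "bil q (cconj q) = 0" using xpq by (simp add: bil_add_left)
  then show "x \<in> base" using xpq pb by (simp add: bil_cconj_self_eq_0_iff)
qed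

lemma vec_subspace_vert: "vec.subspace vert"
  by (simp add: vert_eq_bil_perp vec_subspace_bil_perp)

lemma subspace_vert_re: "subspace vert_re"
  using vec_subspace_vert
  by (auto simp: subspace_def vert_re_def cvec_add cvec_scaleR
      intro: vec.subspace_0 vec.subspace_add vec.subspace_scale)

lemma vert_eq_complexify: "vert = complexify vert_re"
proof (intro set_eqI iffI)
  fix \<xi> assume "\<xi> \<in> vert"
  then have sum: "\<xi> + cconj \<xi> \<in> vert" and diff: "\<xi> - cconj \<xi> \<in> vert"
    using cconj_mem_vert vec_subspace_vert vec.subspace_add vec.subspace_diff by blast+
  have "cvec (revec \<xi>) \<in> vert" "cvec (imvec \<xi>) \<in> vert"
    unfolding cvec_revec_eq cvec_imvec_eq
    by (rule vec.subspace_scale[OF vec_subspace_vert sum], rule vec.subspace_scale[OF vec_subspace_vert diff])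
  then show "\<xi> \<in> complexify vert_re" by (simp add: complexify_def vert_re_def)
next
  fix \<xi> assume "\<xi> \<in> complexify vert_re"
  then have "cvec (revec \<xi>) + \<i> *s cvec (imvec \<xi>) \<in> vert"
    using vec_subspace_vert
    by (simp add: complexify_def vert_re_def vec.subspace_add vec.subspace_scale)
  then show "\<xi> \<in> vert" by (simp only: cvec_revec_plus_imvec)
qed

lemma base_eq_complexify: "base = complexify (vert_re\<^sup>\<bottom>)"
  using base_eq_bil_perp vert_eq_complexify bil_perp_complexify subspace_0[OF subspace_vert_re]
  by simp

lemma cdim_base: "cdim base + dim vert_re = CARD('n)"
proof -
  have "{y \<in> UNIV. \<forall>x\<in>vert_re. orthogonal x y} = vert_re\<^sup>\<bottom>"
    by (auto simp: orthogonal_comp_def)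
  then have "dim (vert_re\<^sup>\<bottom>) + dim vert_re = CARD('n)"
    using dim_subspace_orthogonal_to_vectors[OF subspace_vert_re subspace_UNIV] by simp
  then show ?thesis
    by (simp add: base_eq_complexify cdim_complexify subspace_orthogonal_comp)
qed

lemma full_rank:
  assumes "cdim base = CARD('n)"
  shows "base = UNIV \<and> vert = {0}"
proof -
  have "dim vert_re = 0" using assms cdim_base by simp
  then have "vert_re = {0}" using dim_eq_0 subspace_0[OF subspace_vert_re] by blast
  then show ?thesis using base_eq_complexify vert_eq_complexify by simp
qed

lemma base_orthogonal_vert_re:
  assumes "v \<in> base" "w \<in> vert_re"
  shows "inner (revec v) w = 0 \<and> inner (imvec v) w = 0"
  using assms by (simp add: base_eq_complexify complexify_def orthogonal_comp_def orthogonal_def inner_commute)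

end

locale pos_lagrangian_frame = pos_lagrangian \<Lambda> for \<Lambda> :: "((complex^'n) \<times> (complex^'n)) set" +
  fixes B :: "(real^'n) set" and \<eta> :: "real^'n \<Rightarrow> complex^'n"
  assumes finite_B: "finite B" and orthogonal_B: "pairwise orthogonal B"
    and norm_B: "\<And>b. b \<in> B \<Longrightarrow> norm b = 1" and span_B: "span B = vert_re\<^sup>\<bottom>"
    and frame_mem: "\<And>b. b \<in> B \<Longrightarrow> (cvec b, \<eta> b) \<in> \<Lambda>"
begin

definition coeff :: "real^'n \<Rightarrow> real^'n \<Rightarrow> complex" where
  "coeff c b = bil (cvec c) (\<eta> b)"

definition lift :: "complex^'n \<Rightarrow> complex^'n" where
  "lift x = (\<Sum>b\<in>B. bil (cvec b) x *s \<eta> b)"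

text \<open>\<open>rho x = (1/2) \<Sum>b c. coeff c b * bil (cvec c) x * bil (cvec b) x\<close>, so that \<open>grad rho\<close> agrees
  with \<open>lift\<close> on \<open>base\<close> up to \<open>vert\<close>.\<close>
definition rho :: "complex^'n^'n" where
  "rho = (\<Sum>b\<in>B. \<Sum>c\<in>B. outer_prod ((coeff c b / 2) *s cvec c) (cvec b))"

lemma base_eq_range_frame: "base = range (\<lambda>a. \<Sum>b\<in>B. a b *s cvec b)"
  using base_eq_complexify complexify_span[OF finite_B] span_B by simp

lemma base_expand: "x \<in> base \<Longrightarrow> (\<Sum>b\<in>B. bil (cvec b) x *s cvec b) = x"
  using complexify_orthonormal_expand[OF finite_B orthogonal_B norm_B] base_eq_complexify span_B
  by simp

lemma coeff_sym: "b \<in> B \<Longrightarrow> c \<in> B \<Longrightarrow> coeff c b = coeff b c"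
  using mem_iff_symp frame_mem by (fastforce simp: coeff_def symp_def)

lemma lift_mem: "x \<in> base \<Longrightarrow> (x, lift x) \<in> \<Lambda>"
  using pair_sum[OF finite_B, of "\<lambda>b. bil (cvec b) x *s cvec b" "\<lambda>b. bil (cvec b) x *s \<eta> b"]
    pair_scale frame_mem base_expand
  by (simp add: lift_def)

lemma grad_rho: "grad rho x = (\<Sum>b\<in>B. \<Sum>c\<in>B. (coeff c b * bil (cvec b) x) *s cvec c)"
proof -
  define T where "T b c = (coeff c b * bil (cvec b) x) *s cvec c" for b c
  have "grad rho x = (\<Sum>b\<in>B. \<Sum>c\<in>B. (1/2) *s T b c + (1/2) *s T c b)"
    unfolding rho_def grad_sum grad_outer_prod
    by (intro sum.cong refl) (simp add: T_def coeff_sym bil_scale_left vector_smult_assoc mult_ac)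
  also have "\<dots> = (1/2) *s (\<Sum>b\<in>B. \<Sum>c\<in>B. T b c) + (1/2) *s (\<Sum>b\<in>B. \<Sum>c\<in>B. T c b)"
    by (simp add: sum.distrib vec.scale_sum_right)
  also have "(\<Sum>b\<in>B. \<Sum>c\<in>B. T c b) = (\<Sum>b\<in>B. \<Sum>c\<in>B. T b c)"
    by (rule sum.swap)
  finally show ?thesis
    by (simp add: T_def vec.scale_left_distrib[symmetric])
qed

lemma grad_rho_mem_base: "grad rho x \<in> base"
proof -
  have "grad rho x = (\<Sum>c\<in>B. (\<Sum>b\<in>B. coeff c b * bil (cvec b) x) *s cvec c)"
    unfolding grad_rho by (subst sum.swap) (simp add: vec.scale_sum_left)
  then show ?thesis
    unfolding base_eq_range_frame by (rule range_eqI[where x = "\<lambda>c. \<Sum>b\<in>B. coeff c b * bil (cvec b) x"])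
qed

lemma lift_minus_grad_rho_mem_vert: "lift x - grad rho x \<in> vert"
proof -
  have "bil y (lift x) = bil y (grad rho x)" if y: "y \<in> base" for y
  proof -
    have "bil y (\<eta> b) = (\<Sum>c\<in>B. bil (cvec c) y * coeff c b)" for b
      using arg_cong[OF base_expand[OF y], of "\<lambda>z. bil z (\<eta> b)"]
      by (simp add: bil_sum_left bil_scale_left coeff_def)
    then show ?thesis
      by (simp add: lift_def grad_rho bil_sum_right bil_scale_right bil_commute[of y]
          sum_distrib_left mult_ac)
  qed
  then show ?thesis by (simp add: vert_eq_bil_perp bil_perp_def bil_diff_right)
qed

lemma \<Lambda>_eq_grad_rho: "\<Lambda> = {(x, grad rho x + \<xi>) | x \<xi>. x \<in> base \<and> \<xi> \<in> vert}"
proof (intro set_eqI iffI)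
  fix X assume "X \<in> \<Lambda>"
  then obtain x \<zeta> where X: "X = (x, \<zeta>)" and x\<zeta>: "(x, \<zeta>) \<in> \<Lambda>" by (cases X) auto
  then have x: "x \<in> base" using base_iff by blast
  then have "\<zeta> - lift x \<in> vert"
    using pair_diff[OF x\<zeta> lift_mem[OF x]] by (simp add: vert_def)
  then have "(\<zeta> - lift x) + (lift x - grad rho x) \<in> vert"
    using lift_minus_grad_rho_mem_vert vec_subspace_vert vec.subspace_add by blast
  then show "X \<in> {(x, grad rho x + \<xi>) | x \<xi>. x \<in> base \<and> \<xi> \<in> vert}"
    using X x by force
next
  fix X assume "X \<in> {(x, grad rho x + \<xi>) | x \<xi>. x \<in> base \<and> \<xi> \<in> vert}"
  then obtain x \<xi> where X: "X = (x, grad rho x + \<xi>)" and x: "x \<in> base" and \<xi>: "\<xi> \<in> vert"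
    by blast
  have "\<xi> - (lift x - grad rho x) \<in> vert"
    using \<xi> lift_minus_grad_rho_mem_vert vec_subspace_vert vec.subspace_diff by blast
  then have "(0, \<xi> - (lift x - grad rho x)) \<in> \<Lambda>" by (simp add: vert_def)
  from pair_add[OF lift_mem[OF x] this] show "X \<in> \<Lambda>" using X by (simp add: algebra_simps)
qed

text \<open>At a real point \<open>rho\<close> is half the pairing of the point of \<open>\<Lambda>\<close> over its projection to
  \<open>span B\<close>, whose imaginary part is nonnegative by positivity.\<close>
lemma Im_quad_rho_nonneg: "0 \<le> Im (quad rho (cvec r))"
proof -
  define p where "p = (\<Sum>b\<in>B. complex_of_real (inner b r) *s cvec b)"
  define \<zeta> where "\<zeta> = (\<Sum>b\<in>B. complex_of_real (inner b r) *s \<eta> b)"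
  have "(p, \<zeta>) \<in> \<Lambda>"
    unfolding p_def \<zeta>_def using finite_B by (rule pair_sum) (intro pair_scale frame_mem)
  moreover have "cconj p = p"
  proof -
    have "p = cvec (\<Sum>b\<in>B. inner b r *\<^sub>R b)" by (simp add: p_def vec_eq_iff sum_component)
    then show ?thesis by simp
  qed
  ultimately have nonneg: "0 \<le> Im (bil p \<zeta>)" using Im_bil_cconj_nonneg by fastforce
  have eq: "quad rho (cvec r) = bil p \<zeta> / 2"
    by (simp add: rho_def p_def \<zeta>_def quad_sum quad_outer_prod bil_sum_left bil_sum_right
        bil_scale_left bil_scale_right bil_cvec_cvec coeff_def sum_divide_distrib sum_distrib_left
        inner_commute[of r] mult_ac)
  show ?thesis unfolding eq using nonneg by simp
qed

end

context pos_lagrangian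
begin

lemma obtain_rho:
  obtains Q where "\<forall>r. 0 \<le> Im (quad Q (cvec r))" "range (grad Q) \<subseteq> base"
    "\<Lambda> = {(x, grad Q x + \<xi>) | x \<xi>. x \<in> base \<and> \<xi> \<in> vert}"
proof -
  obtain B where B: "B \<subseteq> vert_re\<^sup>\<bottom>" "pairwise orthogonal B" "\<And>b. b \<in> B \<Longrightarrow> norm b = 1"
    "independent B" "span B = vert_re\<^sup>\<bottom>"
    using orthonormal_basis_subspace[OF subspace_orthogonal_comp] by metis
  have "\<forall>b\<in>B. \<exists>\<zeta>. (cvec b, \<zeta>) \<in> \<Lambda>"
    using B(1) subspace_0[OF subspace_orthogonal_comp] base_eq_complexify cvec_mem_complexify base_iff
    by blast
  then obtain \<eta> where "\<And>b. b \<in> B \<Longrightarrow> (cvec b, \<eta> b) \<in> \<Lambda>" by metis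
  then interpret pos_lagrangian_frame \<Lambda> B \<eta>
    using B independent_imp_finite by unfold_locales auto
  show thesis
    by (rule that[of rho]) (auto simp: Im_quad_rho_nonneg grad_rho_mem_base \<Lambda>_eq_grad_rho[symmetric])
qed

lemma \<Lambda>_eq_Lappc:
  assumes L: "distinct L" "span (set L) = vert_re"
    and \<Lambda>: "\<Lambda> = {(x, grad Q x + \<xi>) | x \<xi>. x \<in> base \<and> \<xi> \<in> vert}"
  shows "\<Lambda> = {(x, grad Q x + Lappc L \<theta>) | x \<theta>.
                length \<theta> = length L \<and> Ltrans L x = replicate (length L) 0}"
proof -
  have "base = {x. Ltrans L x = replicate (length L) 0}"
    unfolding base_eq_complexify Ltrans_eq_0_iff L(2) by simp
  moreover have "vert = {Lappc L \<theta> | \<theta>. length \<theta> = length L}"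
    using vert_eq_complexify range_Lappc[OF L(1)] L(2) by simp
  ultimately show ?thesis using \<Lambda> by auto
qed

end

theorem proposition4p4:
  fixes \<Lambda> :: "((complex^'n) \<times> (complex^'n)) set"
  assumes "positive_lagrangian \<Lambda>"
  defines "k \<equiv> cdim (fst ` \<Lambda>)"
  defines "N \<equiv> CARD('n) - k"
  shows "\<exists>Q :: complex^'n^'n.
     (\<forall>x :: real^'n. 0 \<le> Im (quad Q (cvec x))) \<and>
     (k = CARD('n) \<longrightarrow> \<Lambda> = {(x, grad Q x) | x. True}) \<and>
     (k < CARD('n) \<longrightarrow>
        (\<exists>L :: (real^'n) list. length L = N \<and>
           inj_on (Lapp L) {\<theta>. length \<theta> = N} \<and>
           (\<forall>v\<in>range (grad Q). \<forall>w\<in>RanL L. inner (revec v) w = 0 \<and> inner (imvec v) w = 0) \<and>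
           \<Lambda> = {(x, grad Q x + Lappc L \<theta>) | x \<theta>.
                  length \<theta> = N \<and> Ltrans L x = replicate N 0}))"
proof -
  interpret pos_lagrangian \<Lambda> by unfold_locales (fact assms(1))
  obtain Q where Q: "\<forall>r. 0 \<le> Im (quad Q (cvec r))" "range (grad Q) \<subseteq> base"
    and \<Lambda>: "\<Lambda> = {(x, grad Q x + \<xi>) | x \<xi>. x \<in> base \<and> \<xi> \<in> vert}"
    by (rule obtain_rho)
  obtain L where L: "distinct L" "independent (set L)" "span (set L) = vert_re" "length L = dim vert_re"
    using subspace_basis_list[OF subspace_vert_re] by blast
  have N: "N = length L"
    using cdim_base L(4) by (simp add: N_def k_def base_def)
  have orth: "\<forall>v\<in>range (grad Q). \<forall>w\<in>RanL L. inner (revec v) w = 0 \<and> inner (imvec v) w = 0"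
    using Q(2) RanL_subset_span[of L] L(3) base_orthogonal_vert_re by blast
  show ?thesis
  proof (intro exI[of _ Q] conjI impI)
    show "\<forall>x. 0 \<le> Im (quad Q (cvec x))" by (fact Q(1))
    show "\<Lambda> = {(x, grad Q x) | x. True}" if "k = CARD('n)"
      using \<Lambda> full_rank that by (auto simp: k_def base_def)
    show "\<exists>L. length L = N \<and> inj_on (Lapp L) {\<theta>. length \<theta> = N} \<and>
        (\<forall>v\<in>range (grad Q). \<forall>w\<in>RanL L. inner (revec v) w = 0 \<and> inner (imvec v) w = 0) \<and>
        \<Lambda> = {(x, grad Q x + Lappc L \<theta>) | x \<theta>. length \<theta> = N \<and> Ltrans L x = replicate N 0}"
      using orth \<Lambda>_eq_Lappc[OF L(1,3) \<Lambda>] inj_on_Lapp[OF L(1,2)] unfolding N by blast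
  qed
qed

end
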